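(* Let $\alpha_1,\dots,\alpha_n\in\mathbb{Z}^{n-1}$ be weights of a representation of $T^{n-1}$ on $\mathbb{C}^n$ in general position (every $n-1$ of them linearly independent). For $i=1,\dots,n$ let $\tilde c_i=(-1)^i\det(\alpha_1,\dots,\widehat{\alpha_i},\dots,\alpha_n)\in\mathbb{Z}$ (nonzero), $c_{\gcd}=\gcd(\tilde c_1,\dots,\tilde c_n)$ and $c_i=\tilde c_i/c_{\gcd}$. Let $G=T^n$ act on $\mathbb{C}^n$ by $(t_1,\dots,t_n)\cdot(z_1,\dots,z_n)=(t_1z_1,\dots,t_nz_n)$ and let $T'=\{t\in G\mid t_1^{c_1}\cdots t_n^{c_n}=1\}$ act by restriction. Then this action of $T'$ on $\mathbb{C}^n$ is strictly appropriate (all its stabilizer subgroups are connected) if and only if $c_i=\pm1$ for all $i$, i.e. if and only if all $\tilde c_i$ coincide up to sign.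
   Context: The orbit space of the original representation coincides with that of $T'$ acting on $\mathbb{C}^n$. For this linear action the fixed point set is the origin and the adjoining condition holds, so "strictly appropriate" amounts to the requirement that every stabilizer subgroup of $T'$ be a torus (have no finite components). *)

theory Defs
  imports "HOL-Analysis.Analysis"
begin

text \<open>Indices are 0-based: the weights are alpha 0, ..., alpha (n-1), the
  paper's alpha_i being our alpha (i-1). A weight alpha k in Z^(n-1) is the function
  r \<mapsto> alpha k r, r < n-1. Points of C^n and of T^n are functions nat \<Rightarrow> complex
  (coordinates i < n), with coordinates i \<ge> n fixed (0 for points of C^n, 1 for torus
  elements), so that the product topology on nat \<Rightarrow> complex restricts to the usual one.\<close>

definition detn :: "nat \<Rightarrow> (nat \<Rightarrow> nat \<Rightarrow> int) \<Rightarrow> int" where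
  "detn m M = (\<Sum>p | p permutes {..<m}. sign p * (\<Prod>i<m. M i (p i)))"

definition skip :: "nat \<Rightarrow> nat \<Rightarrow> nat" where
  "skip k j = (if j < k then j else Suc j)"

definition general_position :: "nat \<Rightarrow> (nat \<Rightarrow> nat \<Rightarrow> int) \<Rightarrow> bool" where
  "general_position n alpha \<longleftrightarrow>
     (\<forall>k<n. \<forall>a::nat \<Rightarrow> int.
        (\<forall>r<n-1. (\<Sum>i\<in>{..<n}-{k}. a i * alpha i r) = 0) \<longrightarrow> (\<forall>i\<in>{..<n}-{k}. a i = 0))"

text \<open>c~_i = (-1)^i det(alpha_1,..,alpha_i hat,..,alpha_n); with 0-based k = i-1.\<close>
definition ctilde :: "nat \<Rightarrow> (nat \<Rightarrow> nat \<Rightarrow> int) \<Rightarrow> nat \<Rightarrow> int" where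
  "ctilde n alpha k = (-1) ^ (Suc k) * detn (n-1) (\<lambda>r j. alpha (skip k j) r)"

definition cgcd :: "nat \<Rightarrow> (nat \<Rightarrow> nat \<Rightarrow> int) \<Rightarrow> int" where
  "cgcd n alpha = Gcd (ctilde n alpha ` {..<n})"

definition cc :: "nat \<Rightarrow> (nat \<Rightarrow> nat \<Rightarrow> int) \<Rightarrow> nat \<Rightarrow> int" where
  "cc n alpha k = ctilde n alpha k div cgcd n alpha"

definition torus :: "nat \<Rightarrow> (nat \<Rightarrow> complex) set" where
  "torus n = {t. (\<forall>i<n. cmod (t i) = 1) \<and> (\<forall>i\<ge>n. t i = 1)}"

definition cspace :: "nat \<Rightarrow> (nat \<Rightarrow> complex) set" where
  "cspace n = {z. \<forall>i\<ge>n. z i = 0}"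

definition Tprime :: "nat \<Rightarrow> (nat \<Rightarrow> int) \<Rightarrow> (nat \<Rightarrow> complex) set" where
  "Tprime n c = {t \<in> torus n. (\<Prod>i<n. t i powi c i) = 1}"

definition stabilizer :: "nat \<Rightarrow> (nat \<Rightarrow> int) \<Rightarrow> (nat \<Rightarrow> complex) \<Rightarrow> (nat \<Rightarrow> complex) set" where
  "stabilizer n c z = {t \<in> Tprime n c. \<forall>i<n. t i * z i = z i}"

definition strictly_appropriate :: "nat \<Rightarrow> (nat \<Rightarrow> int) \<Rightarrow> bool" where
  "strictly_appropriate n c \<longleftrightarrow> (\<forall>z\<in>cspace n. connected (stabilizer n c z))"

end

theory Submission
  imports Defs "Jordan_Normal_Form.Determinant"
begin

text \<open>General position makes every maximal minor of the weight matrix nonzero, so no exponent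
  c_k vanishes. If all c_k are \<plusminus>1, the stabilizer of z is trivial when no coordinate of z
  vanishes; otherwise, for a vanishing coordinate z_j, the equation \<Prod> t_i^c_i = 1 can be solved
  for t_j, so every stabilizer element is exp(i \<theta>) for angles \<theta> with \<Sum> c_i \<theta>_i = 0 supported
  on the zero set of z, and s \<mapsto> exp(i s \<theta>) joins it to 1 inside the stabilizer. If some c_k
  is not \<plusminus>1, the point whose only vanishing coordinate is z_k has as stabilizer the
  |c_k|-th roots of unity in coordinate k: a finite set with at least two elements.\<close>

lemma detn_nonzero_if_columns_independent:
  fixes M :: "nat \<Rightarrow> nat \<Rightarrow> int"
  assumes indep: "\<forall>a::nat \<Rightarrow> int. (\<forall>r<m. (\<Sum>j<m. a j * M r j) = 0) \<longrightarrow> (\<forall>j<m. a j = 0)"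
  shows "detn m M \<noteq> 0"
proof
  assume "detn m M = 0"
  let ?A = "Matrix.mat m m (\<lambda>(i, j). M i j)"
  have "Determinant.det ?A = detn m M"
    unfolding Determinant.det_def detn_def
    by (auto simp: atLeast0LessThan permutes_in_image intro!: sum.cong prod.cong)
  with \<open>detn m M = 0\<close> obtain v where v: "v \<in> carrier_vec m" "v \<noteq> 0\<^sub>v m" "?A *\<^sub>v v = 0\<^sub>v m"
    using det_0_iff_vec_prod_zero[of ?A m] by auto
  have "(\<Sum>j<m. v $ j * M r j) = 0" if "r < m" for r
  proof -
    have "(?A *\<^sub>v v) $ r = 0" using v(3) that by simp
    then show ?thesis
      using that v(1) by (simp add: scalar_prod_def row_def atLeast0LessThan mult.commute)
  qed
  with indep have "\<forall>j<m. v $ j = 0" by blast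
  then have "v = 0\<^sub>v m" using v(1) by (intro eq_vecI) auto
  with v(2) show False by simp
qed

lemma bij_betw_skip:
  assumes "k < n"
  shows "bij_betw (skip k) {..<n-1} ({..<n} - {k})"
proof (rule bij_betw_imageI)
  show "inj_on (skip k) {..<n-1}" unfolding inj_on_def skip_def by auto
  have "i \<in> skip k ` {..<n-1}" if "i < n" "i \<noteq> k" for i
    using that assms unfolding skip_def
    by (cases "i < k") (auto intro: image_eqI[of _ _ i] image_eqI[of _ _ "i - 1"])
  then show "skip k ` {..<n-1} = {..<n} - {k}"
    using assms unfolding skip_def by auto
qed

lemma ctilde_nonzero:
  assumes gp: "general_position n alpha" and k: "k < n"
  shows "ctilde n alpha k \<noteq> 0"
proof -
  have "detn (n-1) (\<lambda>r j. alpha (skip k j) r) \<noteq> 0"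
  proof (rule detn_nonzero_if_columns_independent, intro allI impI)
    fix a :: "nat \<Rightarrow> int" and j
    assume rel: "\<forall>r<n-1. (\<Sum>j<n-1. a j * alpha (skip k j) r) = 0" and j: "j < n - 1"
    define b where "b i = a (if i < k then i else i - 1)" for i
    have b_skip: "b (skip k j) = a j" for j unfolding b_def skip_def by auto
    have "(\<Sum>i\<in>{..<n}-{k}. b i * alpha i r) = 0" if "r < n - 1" for r
      using rel that sum.reindex_bij_betw[OF bij_betw_skip[OF k], of "\<lambda>i. b i * alpha i r"]
      by (simp add: b_skip)
    with gp k have "\<forall>i\<in>{..<n}-{k}. b i = 0" unfolding general_position_def by blast
    moreover have "skip k j \<in> {..<n}-{k}"
      using bij_betw_apply[OF bij_betw_skip[OF k]] j by simp
    ultimately show "a j = 0" using b_skip by metis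
  qed
  then show ?thesis unfolding ctilde_def by simp
qed

lemma cc_nonzero:
  assumes gp: "general_position n alpha" and k: "k < n"
  shows "cc n alpha k \<noteq> 0"
proof -
  have "cgcd n alpha dvd ctilde n alpha k" unfolding cgcd_def using k by (intro Gcd_dvd) auto
  then obtain q where q: "ctilde n alpha k = cgcd n alpha * q" by (auto simp: dvd_def)
  with ctilde_nonzero[OF gp k] have "cgcd n alpha \<noteq> 0" "q \<noteq> 0" by auto
  then show ?thesis unfolding cc_def q by simp
qed

lemma path_connected_if_path_component_from:
  assumes "\<forall>y\<in>S. path_component S a y"
  shows "path_connected S"
  unfolding path_connected_component
  using assms path_component_sym path_component_trans by blast

lemma exp_angles_in_stabilizer:
  fixes \<theta> :: "nat \<Rightarrow> real"
  assumes supp: "\<forall>i. i \<ge> n \<or> z i \<noteq> 0 \<longrightarrow> \<theta> i = 0"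
    and balanced: "(\<Sum>i<n. of_int (c i) * \<theta> i) = 0"
  shows "(\<lambda>i. exp (\<i> * of_real (\<theta> i))) \<in> stabilizer n c z"
proof -
  have "(\<Prod>i<n. exp (\<i> * of_real (\<theta> i)) powi c i) = exp (\<Sum>i<n. of_int (c i) * (\<i> * of_real (\<theta> i)))"
    by (simp add: exp_power_int exp_sum)
  also have "(\<Sum>i<n. of_int (c i) * (\<i> * of_real (\<theta> i))) = \<i> * of_real (\<Sum>i<n. of_int (c i) * \<theta> i)"
    by (simp add: sum_distrib_left algebra_simps)
  finally have "(\<Prod>i<n. exp (\<i> * of_real (\<theta> i)) powi c i) = 1"
    using balanced by simp
  moreover have "exp (\<i> * of_real (\<theta> i)) * z i = z i" for i
    using supp by (cases "z i = 0") auto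
  ultimately show ?thesis
    using supp unfolding stabilizer_def Tprime_def torus_def by auto
qed

lemma path_component_stabilizer_one_exp_angles:
  fixes \<theta> :: "nat \<Rightarrow> real"
  assumes supp: "\<forall>i. i \<ge> n \<or> z i \<noteq> 0 \<longrightarrow> \<theta> i = 0"
    and balanced: "(\<Sum>i<n. of_int (c i) * \<theta> i) = 0"
  shows "path_component (stabilizer n c z) (\<lambda>i. 1) (\<lambda>i. exp (\<i> * of_real (\<theta> i)))"
  unfolding path_component_def
proof (intro exI conjI)
  let ?g = "\<lambda>s i. exp (\<i> * of_real (s * \<theta> i))"
  show "path ?g"
    unfolding path_def by (intro continuous_on_coordinatewise_then_product continuous_intros)
  have "(\<Sum>i<n. of_int (c i) * (s * \<theta> i)) = 0" for s
    using balanced by (simp add: sum_distrib_left algebra_simps flip: sum_distrib_left)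
  then show "path_image ?g \<subseteq> stabilizer n c z"
    unfolding path_image_def using supp
    by (auto intro!: exp_angles_in_stabilizer[where \<theta> = "\<lambda>i. _ * \<theta> i", simplified])
qed (simp_all add: pathstart_def pathfinish_def)

lemma stabilizer_elem_eq_exp_angles:
  assumes unimodular: "\<forall>k<n. c k = 1 \<or> c k = -1" and t: "t \<in> stabilizer n c z"
  obtains \<theta> :: "nat \<Rightarrow> real"
  where "\<forall>i. i \<ge> n \<or> z i \<noteq> 0 \<longrightarrow> \<theta> i = 0" "(\<Sum>i<n. of_int (c i) * \<theta> i) = 0"
    "t = (\<lambda>i. exp (\<i> * of_real (\<theta> i)))"
proof -
  have unit: "cmod (t i) = 1" if "i < n" for i
    using t that unfolding stabilizer_def Tprime_def torus_def by auto
  have fixed: "t i = 1" if "i \<ge> n \<or> z i \<noteq> 0" for i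
    using t that unfolding stabilizer_def Tprime_def torus_def by (cases "i < n") auto
  have prod_t: "(\<Prod>i<n. t i powi c i) = 1"
    using t unfolding stabilizer_def Tprime_def by auto
  show ?thesis
  proof (cases "\<exists>j<n. z j = 0")
    case False
    then have "t = (\<lambda>i. 1)" using fixed by (metis not_le)
    then show ?thesis by (intro that[of "\<lambda>i. 0"]) auto
  next
    case True
    then obtain j where j: "j < n" "z j = 0" by blast
    define \<phi> where "\<phi> i = (if i < n \<and> i \<noteq> j \<and> z i = 0 then Arg (t i) else 0)" for i
    define S where "S = (\<Sum>i\<in>{..<n}-{j}. of_int (c i) * \<phi> i)"
    define \<theta> where "\<theta> = \<phi>(j := - of_int (c j) * S)"
    have cj_sq: "c j * c j = 1" using unimodular j by auto
    have t_other: "t i = exp (\<i> * of_real (\<phi> i))" if "i \<noteq> j" for i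
      using that unit[of i] fixed[of i] complex_norm_eq_1_exp_eq unfolding \<phi>_def by auto
    have "(\<Prod>i\<in>{..<n}-{j}. t i powi c i) = exp (\<i> * of_real S)"
      using t_other
      by (simp add: S_def exp_power_int flip: exp_sum)
        (simp add: sum_distrib_left algebra_simps)
    with prod_t j have "t j powi c j * exp (\<i> * of_real S) = 1"
      by (simp add: prod.remove)
    then have "t j powi c j = exp (- (\<i> * of_real S))"
      by (simp add: exp_minus field_simps)
    then have "t j = exp (\<i> * of_real (\<theta> j))"
      \<comment> \<open>as c_j = \<plusminus>1, raising t_j^c_j to the power c_j recovers t_j\<close>
      using power_int_mult[of "t j" "c j" "c j"] cj_sq
      by (simp add: \<theta>_def exp_power_int algebra_simps)
    with t_other have "t = (\<lambda>i. exp (\<i> * of_real (\<theta> i)))"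
      unfolding \<theta>_def by auto
    moreover have "(\<Sum>i<n. of_int (c i) * \<theta> i) = 0"
    proof -
      have "(\<Sum>i<n. of_int (c i) * \<theta> i) = of_int (c j) * \<theta> j + S"
        using j by (simp add: sum.remove S_def \<theta>_def)
      also have "\<dots> = 0"
        using arg_cong[OF cj_sq, of "of_int :: int \<Rightarrow> real"] by (simp add: \<theta>_def algebra_simps)
      finally show ?thesis .
    qed
    moreover have "\<forall>i. i \<ge> n \<or> z i \<noteq> 0 \<longrightarrow> \<theta> i = 0"
      using j unfolding \<theta>_def \<phi>_def by auto
    ultimately show ?thesis using that by blast
  qed
qed

lemma connected_stabilizer_if_unimodular:
  assumes "\<forall>k<n. c k = 1 \<or> c k = -1"
  shows "connected (stabilizer n c z)"
proof -
  have "path_component (stabilizer n c z) (\<lambda>i. 1) t" if t: "t \<in> stabilizer n c z" for t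
  proof -
    obtain \<theta> where "\<forall>i. i \<ge> n \<or> z i \<noteq> 0 \<longrightarrow> \<theta> i = 0" "(\<Sum>i<n. of_int (c i) * \<theta> i) = 0"
      and "t = (\<lambda>i. exp (\<i> * of_real (\<theta> i)))"
      by (rule stabilizer_elem_eq_exp_angles[OF assms t])
    then show ?thesis by (simp add: path_component_stabilizer_one_exp_angles)
  qed
  then show ?thesis
    by (intro path_connected_imp_connected path_connected_if_path_component_from) blast
qed

lemma power_int_eq_1_iff_power_abs:
  fixes w :: "'a::field"
  assumes "c \<noteq> 0"
  shows "w powi c = 1 \<longleftrightarrow> w ^ nat \<bar>c\<bar> = 1"
  using assms unfolding power_int_def
  by (cases "c \<ge> 0") (auto simp: power_inverse nat_abs_int_diff)

lemma stabilizer_off_axis_eq_roots_of_unity: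
  assumes "k < n" "c k \<noteq> 0"
  shows "stabilizer n c (\<lambda>i. if i < n \<and> i \<noteq> k then 1 else 0)
           = (\<lambda>w. (\<lambda>i. 1)(k := w)) ` {w. w ^ nat \<bar>c k\<bar> = 1}"
    (is "stabilizer n c ?z = ?emb ` ?roots")
proof -
  have prod_emb: "(\<Prod>i<n. ?emb w i powi c i) = w powi c k" for w
    using assms(1) by (simp add: prod.remove[of _ k])
  note root_iff = power_int_eq_1_iff_power_abs[OF assms(2), where 'a = complex]
  show ?thesis
  proof (intro equalityI subsetI)
    fix t assume t: "t \<in> stabilizer n c ?z"
    have "t i = 1" if "i \<noteq> k" for i
      using t that unfolding stabilizer_def Tprime_def torus_def by (cases "i < n") auto
    then have t_eq: "t = ?emb (t k)" by auto
    have "(\<Prod>i<n. t i powi c i) = 1" using t unfolding stabilizer_def Tprime_def by blast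
    then have "t k powi c k = 1" by (subst (asm) t_eq) (simp only: prod_emb)
    with t_eq root_iff show "t \<in> ?emb ` ?roots" by blast
  next
    fix t assume "t \<in> ?emb ` ?roots"
    then obtain w where t: "t = ?emb w" and w: "w ^ nat \<bar>c k\<bar> = 1" by blast
    have "cmod w = 1" using power_eq_1_iff[OF w] assms(2) by auto
    moreover have "(\<Prod>i<n. t i powi c i) = 1" using w root_iff prod_emb t by simp
    ultimately show "t \<in> stabilizer n c ?z"
      using assms(1) unfolding t stabilizer_def Tprime_def torus_def by auto
  qed
qed

lemma not_strictly_appropriate_if_exponent:
  assumes "k < n" "c k \<noteq> 0" "c k \<noteq> 1" "c k \<noteq> -1"
  shows "\<not> strictly_appropriate n c"
proof
  assume "strictly_appropriate n c"
  let ?z = "\<lambda>i. if i < n \<and> i \<noteq> k then 1 else (0::complex)"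
  let ?roots = "{w::complex. w ^ nat \<bar>c k\<bar> = 1}"
  have "?z \<in> cspace n" unfolding cspace_def by auto
  with \<open>strictly_appropriate n c\<close> have conn: "connected (stabilizer n c ?z)"
    unfolding strictly_appropriate_def by blast
  have inj: "inj_on (\<lambda>w. (\<lambda>i. 1)(k := w)) ?roots"
    by (rule inj_onI) (metis fun_upd_same)
  have "nat \<bar>c k\<bar> \<ge> 2" using assms by auto
  then have "finite ?roots" "card ?roots \<ge> 2"
    using finite_roots_unity card_roots_unity_eq by auto
  moreover have "stabilizer n c ?z = (\<lambda>w. (\<lambda>i. 1)(k := w)) ` ?roots"
    using assms(1,2) by (rule stabilizer_off_axis_eq_roots_of_unity)
  ultimately have "finite (stabilizer n c ?z)" "card (stabilizer n c ?z) \<ge> 2"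
    by (simp_all add: card_image[OF inj])
  with connected_finite_iff_sing[OF conn] show False by auto
qed

theorem lemma4p3:
  fixes n :: nat and alpha :: "nat \<Rightarrow> nat \<Rightarrow> int"
  assumes "general_position n alpha"
  shows "strictly_appropriate n (cc n alpha) \<longleftrightarrow> (\<forall>k<n. cc n alpha k = 1 \<or> cc n alpha k = -1)"
proof
  assume "strictly_appropriate n (cc n alpha)"
  then show "\<forall>k<n. cc n alpha k = 1 \<or> cc n alpha k = -1"
    using not_strictly_appropriate_if_exponent cc_nonzero[OF assms] by blast
next
  assume "\<forall>k<n. cc n alpha k = 1 \<or> cc n alpha k = -1"
  then show "strictly_appropriate n (cc n alpha)"
    unfolding strictly_appropriate_def by (blast intro: connected_stabilizer_if_unimodular)
qed

end
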